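(* Let $k\ge2$ and $\ell\ge1$ be integers. Let $\Omega_u$ be the set of satisfying assignments of the unrestricted depth-$\ell$ gadget and $\Omega_r$ the set of satisfying assignments of the restricted depth-$\ell$ gadget (on the same variable set). Then $\Omega_r\subseteq\Omega_u$ and $$1-2^{-(k-2)\ell}\le\frac{|\Omega_r|}{|\Omega_u|}\le1-2^{-k\ell}.$$
   Context: Gadgets: take variables $U=\{v_{i,j}: i\in[\ell],j\in[k]\}$ ($\ell$ layers of $k$ variables). For each $i\in\{1,\dots,\ell-1\}$ and $j\in[k]$ let $c_{ij}$ be the clause with $\mathrm{vbl}(c_{ij})=\{v_{i,r}:r\ne j\}\cup\{v_{i+1,j}\}$, forbidding the all-True assignment of these variables if $i$ is odd and the all-False assignment if $i$ is even; let $\mathcal C$ be the set of these $k(\ell-1)$ clauses. Let $c$ be the clause on the first layer $\{v_{1,j}:j\in[k]\}$ forbidding the all-True assignment. The unrestricted depth-$\ell$ gadget is the CNF $(U,\mathcal C)$; the restricted depth-$\ell$ gadget is $(U,\mathcal C\cup\{c\})$. *)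

theory Defs
  imports Complex_Main "HOL-Library.FuncSet"
begin

text \<open>Variable v_{i,j} is represented by the pair (i,j), with i in {1..l}, j in {1..k}.\<close>

definition gvars :: "nat \<Rightarrow> nat \<Rightarrow> (nat \<times> nat) set" where
  "gvars k l = {1..l} \<times> {1..k}"

definition cvbl :: "nat \<Rightarrow> nat \<Rightarrow> nat \<Rightarrow> (nat \<times> nat) set" where
  "cvbl k i j = {(i, r) | r. r \<in> {1..k} \<and> r \<noteq> j} \<union> {(i + 1, j)}"

definition sat_clause :: "((nat \<times> nat) \<Rightarrow> bool) \<Rightarrow> (nat \<times> nat) set \<Rightarrow> bool \<Rightarrow> bool" where
  "sat_clause \<sigma> V b \<longleftrightarrow> \<not> (\<forall>x\<in>V. \<sigma> x = b)"

definition sat_C :: "nat \<Rightarrow> nat \<Rightarrow> ((nat \<times> nat) \<Rightarrow> bool) \<Rightarrow> bool" where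
  "sat_C k l \<sigma> \<longleftrightarrow> (\<forall>i\<in>{1..l-1}. \<forall>j\<in>{1..k}. sat_clause \<sigma> (cvbl k i j) (odd i))"

definition sat_c :: "nat \<Rightarrow> ((nat \<times> nat) \<Rightarrow> bool) \<Rightarrow> bool" where
  "sat_c k \<sigma> \<longleftrightarrow> sat_clause \<sigma> ({1} \<times> {1..k}) True"

definition Omega_u :: "nat \<Rightarrow> nat \<Rightarrow> ((nat \<times> nat) \<Rightarrow> bool) set" where
  "Omega_u k l = {\<sigma> \<in> gvars k l \<rightarrow>\<^sub>E (UNIV :: bool set). sat_C k l \<sigma>}"

definition Omega_r :: "nat \<Rightarrow> nat \<Rightarrow> ((nat \<times> nat) \<Rightarrow> bool) set" where
  "Omega_r k l = {\<sigma> \<in> gvars k l \<rightarrow>\<^sub>E (UNIV :: bool set). sat_C k l \<sigma> \<and> sat_c k \<sigma>}"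

end

theory Submission
  imports Defs
begin

text \<open>The restricted gadget excludes exactly one satisfying assignment of the unrestricted one:
  if the first layer is all True, the clauses c_{1j} force the second layer to be all False,
  those force the third layer to be all True, and so on, so the only excluded assignment is the
  alternating one. Hence |\<Omega>_r| / |\<Omega>_u| = 1 - 1 / |\<Omega>_u|. Trivially
  |\<Omega>_u| \<le> 2^{kl}; and |\<Omega>_u| \<ge> 2^{(k-2)l} because fixing v_{i,1} = True and
  v_{i,2} = False in every layer already satisfies every clause c_{ij}, since each of them
  contains two of these variables with opposite values.\<close>

definition alternating_assignment :: "nat \<Rightarrow> nat \<Rightarrow> (nat \<times> nat) \<Rightarrow> bool" where
  "alternating_assignment k l = (\<lambda>x. if x \<in> gvars k l then odd (fst x) else undefined)"

definition pinned_columns :: "nat \<times> nat \<Rightarrow> bool set" where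
  "pinned_columns x = (if snd x = 1 then {True} else if snd x = 2 then {False} else UNIV)"

lemma finite_gvars: "finite (gvars k l)"
  unfolding gvars_def by simp

lemma card_gvars: "card (gvars k l) = l * k"
  unfolding gvars_def by (simp add: card_cartesian_product)

lemma sat_clause_if_nonconstant:
  assumes "x \<in> V" "y \<in> V" "\<sigma> x \<noteq> \<sigma> y"
  shows "sat_clause \<sigma> V b"
  using assms unfolding sat_clause_def by blast

lemma Omega_u_subset_PiE: "Omega_u k l \<subseteq> gvars k l \<rightarrow>\<^sub>E UNIV"
  unfolding Omega_u_def by blast

lemma finite_Omega_u: "finite (Omega_u k l)"
  by (rule finite_subset[OF Omega_u_subset_PiE]) (simp add: finite_PiE finite_gvars)

lemma card_Omega_u_le: "card (Omega_u k l) \<le> 2 ^ (k * l)"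
proof -
  have "card (Omega_u k l) \<le> card (gvars k l \<rightarrow>\<^sub>E (UNIV :: bool set))"
    by (rule card_mono[OF _ Omega_u_subset_PiE]) (simp add: finite_PiE finite_gvars)
  also have "\<dots> = 2 ^ (k * l)"
    by (simp add: card_PiE finite_gvars card_gvars mult.commute)
  finally show ?thesis .
qed

lemma alternating_assignment_in_Omega_u: "alternating_assignment k l \<in> Omega_u k l"
  unfolding Omega_u_def sat_C_def
proof (intro CollectI conjI ballI)
  show "alternating_assignment k l \<in> gvars k l \<rightarrow>\<^sub>E UNIV"
    unfolding alternating_assignment_def by auto
next
  fix i j assume i: "i \<in> {1..l-1}" and j: "j \<in> {1..k}"
  have "(i + 1, j) \<in> gvars k l" using i j unfolding gvars_def by auto
  then have "alternating_assignment k l (i + 1, j) \<noteq> odd i"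
    unfolding alternating_assignment_def by simp
  then show "sat_clause (alternating_assignment k l) (cvbl k i j) (odd i)"
    unfolding sat_clause_def cvbl_def by blast
qed

lemma alternating_assignment_violates_c:
  assumes "1 \<le> k" "1 \<le> l"
  shows "\<not> sat_c k (alternating_assignment k l)"
  using assms unfolding sat_c_def sat_clause_def alternating_assignment_def gvars_def by auto

lemma layers_alternate:
  assumes "\<sigma> \<in> Omega_u k l" and first_layer: "\<forall>j\<in>{1..k}. \<sigma> (1, j)"
    and "1 \<le> i" "i \<le> l" "j \<in> {1..k}"
  shows "\<sigma> (i, j) = odd i"
  using \<open>1 \<le> i\<close> \<open>i \<le> l\<close> \<open>j \<in> {1..k}\<close>
proof (induction i arbitrary: j rule: dec_induct)
  case base
  then show ?case using first_layer by simp
next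
  case (step n)
  have "sat_clause \<sigma> (cvbl k n j) (odd n)"
    using assms(1) step by (auto simp: Omega_u_def sat_C_def)
  moreover have "\<forall>r\<in>{1..k}. \<sigma> (n, r) = odd n"
    using step by auto
  ultimately have "\<sigma> (n + 1, j) \<noteq> odd n"
    unfolding sat_clause_def cvbl_def by auto
  then show ?case by simp
qed

lemma eq_alternating_assignment_if_violates_c:
  assumes "\<sigma> \<in> Omega_u k l" "\<not> sat_c k \<sigma>"
  shows "\<sigma> = alternating_assignment k l"
proof
  fix x
  show "\<sigma> x = alternating_assignment k l x"
  proof (cases "x \<in> gvars k l")
    case True
    then obtain i j where "x = (i, j)" "i \<in> {1..l}" "j \<in> {1..k}"
      unfolding gvars_def by auto
    moreover have "\<forall>j\<in>{1..k}. \<sigma> (1, j)"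
      using assms(2) unfolding sat_c_def sat_clause_def by auto
    ultimately show ?thesis
      using layers_alternate[OF assms(1)] True unfolding alternating_assignment_def by auto
  next
    case False
    then show ?thesis
      using PiE_arb Omega_u_subset_PiE assms(1) unfolding alternating_assignment_def by fastforce
  qed
qed

lemma Omega_r_eq:
  assumes "1 \<le> k" "1 \<le> l"
  shows "Omega_r k l = Omega_u k l - {alternating_assignment k l}"
  using alternating_assignment_violates_c[OF assms] eq_alternating_assignment_if_violates_c
  unfolding Omega_r_def Omega_u_def by blast

lemma PiE_pinned_columns_subset_Omega_u:
  assumes "2 \<le> k"
  shows "PiE (gvars k l) pinned_columns \<subseteq> Omega_u k l"
proof
  fix \<sigma> assume \<sigma>: "\<sigma> \<in> PiE (gvars k l) pinned_columns"
  have pinned: "\<sigma> (i, 1)" "\<not> \<sigma> (i, 2)" if "i \<in> {1..l}" for i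
  proof -
    have "(i, 1) \<in> gvars k l" "(i, 2) \<in> gvars k l"
      using that assms unfolding gvars_def by auto
    then show "\<sigma> (i, 1)" "\<not> \<sigma> (i, 2)"
      using PiE_mem[OF \<sigma>] unfolding pinned_columns_def by fastforce+
  qed
  have "sat_clause \<sigma> (cvbl k i j) (odd i)" if i: "i \<in> {1..l-1}" and j: "j \<in> {1..k}" for i j
  proof -
    have layers: "i \<in> {1..l}" "i + 1 \<in> {1..l}" using i by auto
    consider "j = 1" | "j = 2" | "j \<noteq> 1" "j \<noteq> 2" by blast
    then show ?thesis
    proof cases
      case 1
      then show ?thesis
        using assms pinned[OF layers(1)] pinned[OF layers(2)]
        by (intro sat_clause_if_nonconstant[of "(i, 2)" _ "(i + 1, 1)"]) (auto simp: cvbl_def)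
    next
      case 2
      then show ?thesis
        using assms pinned[OF layers(1)] pinned[OF layers(2)]
        by (intro sat_clause_if_nonconstant[of "(i, 1)" _ "(i + 1, 2)"]) (auto simp: cvbl_def)
    next
      case 3
      then show ?thesis
        using assms pinned[OF layers(1)]
        by (intro sat_clause_if_nonconstant[of "(i, 1)" _ "(i, 2)"]) (auto simp: cvbl_def)
    qed
  qed
  moreover have "\<sigma> \<in> gvars k l \<rightarrow>\<^sub>E UNIV"
    using \<sigma> by (auto simp: PiE_iff)
  ultimately show "\<sigma> \<in> Omega_u k l"
    unfolding Omega_u_def sat_C_def by blast
qed

lemma card_PiE_pinned_columns:
  assumes "2 \<le> k"
  shows "card (PiE (gvars k l) pinned_columns) = 2 ^ ((k - 2) * l)"
proof -
  have unpinned: "gvars k l \<inter> - {x. snd x \<in> {1, 2}} = {1..l} \<times> {3..k}"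
    using assms unfolding gvars_def by auto
  have "card (PiE (gvars k l) pinned_columns)
      = (\<Prod>x\<in>gvars k l. if snd x \<in> {1, 2} then 1 else 2)"
    by (auto simp: card_PiE finite_gvars pinned_columns_def intro!: prod.cong)
  also have "\<dots> = 2 ^ card (gvars k l \<inter> - {x. snd x \<in> {1, 2}})"
    by (simp only: prod.If_cases[OF finite_gvars] prod.neutral_const prod_constant mult_1)
  also have "\<dots> = 2 ^ card ({1..l} \<times> {3..k})"
    by (simp only: unpinned)
  also have "\<dots> = 2 ^ ((k - 2) * l)"
    by (simp add: card_cartesian_product mult.commute)
  finally show ?thesis .
qed

lemma card_Omega_u_ge:
  assumes "2 \<le> k"
  shows "2 ^ ((k - 2) * l) \<le> card (Omega_u k l)"
  using card_mono[OF finite_Omega_u PiE_pinned_columns_subset_Omega_u[OF assms]]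
  by (simp add: card_PiE_pinned_columns[OF assms])

theorem lemma5p5:
  fixes k l :: nat
  assumes "k \<ge> 2" and "l \<ge> 1"
  shows "Omega_r k l \<subseteq> Omega_u k l \<and>
    1 - 1 / (2::real) ^ ((k - 2) * l) \<le> real (card (Omega_r k l)) / real (card (Omega_u k l)) \<and>
    real (card (Omega_r k l)) / real (card (Omega_u k l)) \<le> 1 - 1 / (2::real) ^ (k * l)"
proof -
  define N where "N = real (card (Omega_u k l))"
  have Omega_r: "Omega_r k l = Omega_u k l - {alternating_assignment k l}"
    using Omega_r_eq assms by simp
  have "card (Omega_r k l) + 1 = card (Omega_u k l)"
    unfolding Omega_r using alternating_assignment_in_Omega_u finite_Omega_u
    by (metis Suc_eq_plus1 card.remove)
  then have ratio: "real (card (Omega_r k l)) / N = 1 - 1 / N" and "N > 0"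
    unfolding N_def by (auto simp: field_simps)
  moreover have "(2::real) ^ ((k - 2) * l) \<le> N"
    using card_Omega_u_ge[OF assms(1)] unfolding N_def
    by (metis of_nat_le_iff of_nat_numeral of_nat_power)
  moreover have "N \<le> (2::real) ^ (k * l)"
    using card_Omega_u_le unfolding N_def
    by (metis of_nat_le_iff of_nat_numeral of_nat_power)
  ultimately have "1 / N \<le> 1 / (2::real) ^ ((k - 2) * l)" "1 / (2::real) ^ (k * l) \<le> 1 / N"
    by (auto intro: divide_left_mono)
  then show ?thesis
    using ratio unfolding Omega_r N_def by auto
qed

end
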